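(* Let $(a,b,c)$ be a cyclic triple, assume (AW), that $(A^a,A^b)$ is a Leonard pair as in the context, and that $(A^b,A^c)$ is also a Leonard pair with eigenvalue orderings $\theta^b_0,\dots,\theta^b_{2s}$ and $\theta^c_0,\dots,\theta^c_{2s}$. Let $\{|\theta^b_M\rangle\}$ be the eigenbasis of $A^b$ attached to the pair $(A^a,A^b)$. Then for $0\le M\le 2s$, $$A^c|\theta^b_M\rangle=A^{(c,b)}_{M+1,M}\,\mathfrak g(M)\,|\theta^b_{M+1}\rangle+A^{(c,b)}_{M,M}|\theta^b_M\rangle+A^{(c,b)}_{M-1,M}\,\mathfrak g(M-1)^{-1}|\theta^b_{M-1}\rangle,$$ where $\mathfrak g(k)=q^{4k}\dfrac{\mathsf b^b}{\mathsf c^b}\cdot\dfrac{\mathsf c^bq^{-2k}+r_0q\,\mathsf c^a\mathsf b^c}{\mathsf b^bq^{2k}+r_0q^{-1}\mathsf c^a\mathsf b^c}$ (the last term is absent for $M=0$).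
   Context: $q\in\mathbb C^*$ is not a root of unity, $s\in\{0,\tfrac12,1,\dots\}$, $\mathcal V$ a complex vector space of dimension $2s+1$ with identity $\mathbb I$; $[X,Y]_q=qXY-q^{-1}YX$. Labels range over $\{\cdot,*,\diamond\}$; $A^{\cdot}=A$, $\mathsf b^\cdot=\mathsf b$, $\mathsf c^\cdot=\mathsf c$. Fix nonzero $r_0,\mathsf b^a,\mathsf c^a$ with $r_0^{-2}=\mathsf b\mathsf c=\mathsf b^*\mathsf c^*=\mathsf b^\diamond\mathsf c^\diamond$; $\theta^a_M=\mathsf b^aq^{2M}+\mathsf c^aq^{-2M}$; for distinct $a,b,c$, $\omega^{\{a,b,c\}}=-(q-q^{-1})^2(\theta^a_s\theta^b_s-r_0^{-1}(q^{2s+1}+q^{-2s-1})\theta^c_s)$. For $A,A^*\in\mathrm{End}(\mathcal V)$ set $A^\diamond=\frac{r_0}{q^2-q^{-2}}[A^*,A]_q+\frac{r_0\omega^{\{\cdot,*,\diamond\}}}{(q-q^{-1})(q^2-q^{-2})}\mathbb I$. Hypothesis (AW): for every ordered pair $(a,b)$ of distinct labels, $c$ the remaining one, $[A^a,[A^a,A^b]_q]_{q^{-1}}=-\frac{(q^2-q^{-2})^2}{r_0^2}A^b+\omega^{\{a,b,c\}}A^a+\frac{q+q^{-1}}{r_0}\omega^{\{a,c,b\}}\mathbb I$. A Leonard pair on $\mathcal V$ is a pair of diagonalizable operators such that each has an eigenbasis in which the other is represented by an irreducible tridiagonal matrix. A cyclic triple is one of $(\cdot,*,\diamond),( *,\diamond,\cdot),(\diamond,\cdot,*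 )$. Coefficients: for a cyclic triple $(a,b,c)$, $A^{(b,a)}_{M,M-1}=q^{2-4s}\frac{(1-q^{2M})(\mathsf c^a-\mathsf b^aq^{2M+4s})(\mathsf b^b\mathsf b^cr_0q^{4s-1}+\mathsf b^aq^{2M-2})(\mathsf c^a\mathsf c^cr_0q^{-1}+\mathsf c^bq^{2M-2})}{(\mathsf c^a-\mathsf b^aq^{4M-2})(\mathsf c^a-\mathsf b^aq^{4M})}$, $A^{(b,a)}_{M-1,M}=\frac{(1-q^{2M-4s-2})(\mathsf c^a-\mathsf b^aq^{2M-2})(\mathsf c^a+\mathsf b^b\mathsf b^cr_0q^{2M+4s-1})(\mathsf c^b+\mathsf b^a\mathsf c^cr_0q^{2M-1})}{(\mathsf c^a-\mathsf b^aq^{4M-4})(\mathsf c^a-\mathsf b^aq^{4M-2})}$, $A^{(b,a)}_{M,M}=\theta^b_0-A^{(b,a)}_{M,M+1}-A^{(b,a)}_{M,M-1}$; coefficients with indices outside $\{0,\dots,2s\}$ are $0$. $A^{(a,b)}_{M,N}$ is the image of $A^{(b,a)}_{M,N}$ under $\mathsf b^a\leftrightarrow\mathsf b^b$, $\mathsf c^a\leftrightarrow\mathsf c^b$, $\mathsf b^c\mapsto q^{-4s}\mathsf c^c$, $\mathsf c^c\mapsto q^{4s}\mathsf b^c$. This defines $A^{(x,y)}$ for all six ordered pairs of distinct labels (in particular $A^{(c,b)}$ is obtained from the cyclic triple $(b,c,a)$). Bases attached to a Leonard pair: for cyclic $(a,b,c)$ with $(A^a,A^b)$ a Leonard pair (eigenvalue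 orderings $\theta^a_M,\theta^b_M$), there are bases $\{|\theta^a_M\rangle\}$, $\{|\theta^b_M\rangle\}$ with $A^a|\theta^a_M\rangle=\theta^a_M|\theta^a_M\rangle$, $A^b|\theta^a_M\rangle=A^{(b,a)}_{M+1,M}|\theta^a_{M+1}\rangle+A^{(b,a)}_{M,M}|\theta^a_M\rangle+A^{(b,a)}_{M-1,M}|\theta^a_{M-1}\rangle$, $A^b|\theta^b_M\rangle=\theta^b_M|\theta^b_M\rangle$, $A^a|\theta^b_M\rangle=A^{(a,b)}_{M+1,M}|\theta^b_{M+1}\rangle+A^{(a,b)}_{M,M}|\theta^b_M\rangle+A^{(a,b)}_{M-1,M}|\theta^b_{M-1}\rangle$; these are the bases "attached to the pair $(A^a,A^b)$". *)

theory Defs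
  imports "HOL-Analysis.Analysis"
begin

text \<open>The three labels: Dot, Star, Dia stand for the plain label, star and diamond.
  The dimension of V is n+1 where n = 2s; vectors are complex^'n with CARD('n) = n+1,
  operators are complex^'n^'n matrices.\<close>

datatype label = Dot | Star | Dia

definition cyclic :: "label \<Rightarrow> label \<Rightarrow> label \<Rightarrow> bool" where
  "cyclic a b c \<longleftrightarrow> (a,b,c) \<in> {(Dot,Star,Dia),(Star,Dia,Dot),(Dia,Dot,Star)}"

definition smat :: "complex \<Rightarrow> complex^'n^'m \<Rightarrow> complex^'n^'m" where
  "smat c X = (\<chi> i j. c * X $ i $ j)"

definition qbr :: "complex \<Rightarrow> complex^'n^'n \<Rightarrow> complex^'n^'n \<Rightarrow> complex^'n^'n" where
  "qbr q X Y = smat q (X ** Y) - smat (inverse q) (Y ** X)"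

definition theta :: "complex \<Rightarrow> (label \<Rightarrow> complex) \<Rightarrow> (label \<Rightarrow> complex) \<Rightarrow> label \<Rightarrow> int \<Rightarrow> complex" where
  "theta q bb cc x m = bb x * q powi (2*m) + cc x * q powi (-2*m)"

text \<open>theta^x_s with s = n/2\<close>
definition thetaS :: "complex \<Rightarrow> nat \<Rightarrow> (label \<Rightarrow> complex) \<Rightarrow> (label \<Rightarrow> complex) \<Rightarrow> label \<Rightarrow> complex" where
  "thetaS q n bb cc x = bb x * q powi (int n) + cc x * q powi (- int n)"

definition omega :: "complex \<Rightarrow> nat \<Rightarrow> complex \<Rightarrow> (label \<Rightarrow> complex) \<Rightarrow> (label \<Rightarrow> complex)
    \<Rightarrow> label \<Rightarrow> label \<Rightarrow> label \<Rightarrow> complex" where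
  "omega q n r0 bb cc x y z =
     - ((q - inverse q)^2) * (thetaS q n bb cc x * thetaS q n bb cc y
        - inverse r0 * (q powi (int n + 1) + q powi (- int n - 1)) * thetaS q n bb cc z)"

definition is_basis :: "nat \<Rightarrow> (int \<Rightarrow> complex^'n) \<Rightarrow> bool" where
  "is_basis n v \<longleftrightarrow>
     (\<forall>c. (\<Sum>M\<in>{0..int n}. c M *s v M) = 0 \<longrightarrow> (\<forall>M\<in>{0..int n}. c M = 0)) \<and>
     (\<forall>w. \<exists>c. w = (\<Sum>M\<in>{0..int n}. c M *s v M))"

definition irr_tridiag_in :: "nat \<Rightarrow> complex^'n^'n \<Rightarrow> (int \<Rightarrow> complex^'n) \<Rightarrow> bool" where
  "irr_tridiag_in n B v \<longleftrightarrow>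
     (\<exists>x :: int \<Rightarrow> int \<Rightarrow> complex.
        (\<forall>M\<in>{0..int n}. B *v v M = (\<Sum>N\<in>{0..int n}. x N M *s v N)) \<and>
        (\<forall>M\<in>{0..int n}. \<forall>N\<in>{0..int n}. \<bar>N - M\<bar> > 1 \<longrightarrow> x N M = 0) \<and>
        (\<forall>M\<in>{0..int n}. \<forall>N\<in>{0..int n}. \<bar>N - M\<bar> = 1 \<longrightarrow> x N M \<noteq> 0))"

definition eigenbasis_ord :: "nat \<Rightarrow> complex^'n^'n \<Rightarrow> (int \<Rightarrow> complex) \<Rightarrow> (int \<Rightarrow> complex^'n) \<Rightarrow> bool" where
  "eigenbasis_ord n A th v \<longleftrightarrow> is_basis n v \<and> (\<forall>M\<in>{0..int n}. A *v v M = th M *s v M)"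

definition leonard_pair_ord :: "nat \<Rightarrow> complex^'n^'n \<Rightarrow> complex^'n^'n
    \<Rightarrow> (int \<Rightarrow> complex) \<Rightarrow> (int \<Rightarrow> complex) \<Rightarrow> bool" where
  "leonard_pair_ord n A B th ph \<longleftrightarrow>
     (\<exists>u. eigenbasis_ord n A th u \<and> irr_tridiag_in n B u) \<and>
     (\<exists>w. eigenbasis_ord n B ph w \<and> irr_tridiag_in n A w)"

text \<open>A^{(b,a)}_{M,M-1} in terms of Ba=b^a, Ca=c^a, Bb, Cb, Bc, Cc; 4s = 2n\<close>
definition cL :: "complex \<Rightarrow> nat \<Rightarrow> complex \<Rightarrow> complex \<Rightarrow> complex \<Rightarrow> complex \<Rightarrow> complex
    \<Rightarrow> complex \<Rightarrow> complex \<Rightarrow> int \<Rightarrow> complex" where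
  "cL q n r0 Ba Ca Bb Cb Bc Cc M =
     q powi (2 - 2 * int n) * (1 - q powi (2*M)) * (Ca - Ba * q powi (2*M + 2 * int n))
     * (Bb * Bc * r0 * q powi (2 * int n - 1) + Ba * q powi (2*M - 2))
     * (Ca * Cc * r0 * q powi (-1) + Cb * q powi (2*M - 2))
     / ((Ca - Ba * q powi (4*M - 2)) * (Ca - Ba * q powi (4*M)))"

definition cU :: "complex \<Rightarrow> nat \<Rightarrow> complex \<Rightarrow> complex \<Rightarrow> complex \<Rightarrow> complex \<Rightarrow> complex
    \<Rightarrow> complex \<Rightarrow> complex \<Rightarrow> int \<Rightarrow> complex" where
  "cU q n r0 Ba Ca Bb Cb Bc Cc M =
     (1 - q powi (2*M - 2 * int n - 2)) * (Ca - Ba * q powi (2*M - 2))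
     * (Ca + Bb * Bc * r0 * q powi (2*M + 2 * int n - 1))
     * (Cb + Ba * Cc * r0 * q powi (2*M - 1))
     / ((Ca - Ba * q powi (4*M - 4)) * (Ca - Ba * q powi (4*M - 2)))"

definition cE :: "complex \<Rightarrow> nat \<Rightarrow> complex \<Rightarrow> complex \<Rightarrow> complex \<Rightarrow> complex \<Rightarrow> complex
    \<Rightarrow> complex \<Rightarrow> complex \<Rightarrow> int \<Rightarrow> int \<Rightarrow> complex" where
  "cE q n r0 Ba Ca Bb Cb Bc Cc i j =
     (if i \<notin> {0..int n} \<or> j \<notin> {0..int n} then 0
      else if i = j + 1 then cL q n r0 Ba Ca Bb Cb Bc Cc i
      else if j = i + 1 then cU q n r0 Ba Ca Bb Cb Bc Cc j
      else if i = j then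
        Bb + Cb
        - (if i + 1 \<le> int n then cU q n r0 Ba Ca Bb Cb Bc Cc (i + 1) else 0)
        - (if i - 1 \<ge> 0 then cL q n r0 Ba Ca Bb Cb Bc Cc i else 0)
      else 0)"

text \<open>For a cyclic triple (x,y,z): coef_yx gives A^{(y,x)}, coef_xy gives A^{(x,y)}.\<close>
definition coef_yx :: "complex \<Rightarrow> nat \<Rightarrow> complex \<Rightarrow> (label \<Rightarrow> complex) \<Rightarrow> (label \<Rightarrow> complex)
    \<Rightarrow> label \<Rightarrow> label \<Rightarrow> label \<Rightarrow> int \<Rightarrow> int \<Rightarrow> complex" where
  "coef_yx q n r0 bb cc x y z = cE q n r0 (bb x) (cc x) (bb y) (cc y) (bb z) (cc z)"

definition coef_xy :: "complex \<Rightarrow> nat \<Rightarrow> complex \<Rightarrow> (label \<Rightarrow> complex) \<Rightarrow> (label \<Rightarrow> complex)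
    \<Rightarrow> label \<Rightarrow> label \<Rightarrow> label \<Rightarrow> int \<Rightarrow> int \<Rightarrow> complex" where
  "coef_xy q n r0 bb cc x y z =
     cE q n r0 (bb y) (cc y) (bb x) (cc x) (q powi (- 2 * int n) * cc z) (q powi (2 * int n) * bb z)"

definition attached_bases :: "complex \<Rightarrow> nat \<Rightarrow> complex \<Rightarrow> (label \<Rightarrow> complex) \<Rightarrow> (label \<Rightarrow> complex)
    \<Rightarrow> (label \<Rightarrow> complex^'n^'n) \<Rightarrow> label \<Rightarrow> label \<Rightarrow> label
    \<Rightarrow> (int \<Rightarrow> complex^'n) \<Rightarrow> (int \<Rightarrow> complex^'n) \<Rightarrow> bool" where
  "attached_bases q n r0 bb cc A x y z va vb \<longleftrightarrow>
     is_basis n va \<and> is_basis n vb \<and>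
     (\<forall>M\<in>{0..int n}.
        A x *v va M = theta q bb cc x M *s va M \<and>
        A y *v va M = coef_yx q n r0 bb cc x y z (M+1) M *s va (M+1)
                    + coef_yx q n r0 bb cc x y z M M *s va M
                    + coef_yx q n r0 bb cc x y z (M-1) M *s va (M-1) \<and>
        A y *v vb M = theta q bb cc y M *s vb M \<and>
        A x *v vb M = coef_xy q n r0 bb cc x y z (M+1) M *s vb (M+1)
                    + coef_xy q n r0 bb cc x y z M M *s vb M
                    + coef_xy q n r0 bb cc x y z (M-1) M *s vb (M-1))"

definition gfun :: "complex \<Rightarrow> complex \<Rightarrow> (label \<Rightarrow> complex) \<Rightarrow> (label \<Rightarrow> complex)
    \<Rightarrow> label \<Rightarrow> label \<Rightarrow> label \<Rightarrow> int \<Rightarrow> complex" where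
  "gfun q r0 bb cc a b c k =
     q powi (4*k) * (bb b / cc b)
     * (cc b * q powi (-2*k) + r0 * q * cc a * bb c)
     / (bb b * q powi (2*k) + r0 * q powi (-1) * cc a * bb c)"

end

theory Submission
  imports Defs
begin

(*
  For a cyclic triple (a, b, c), the relations (AW) and the definition of the diamond operator
  express A^c as a q-commutator of the other two operators,
    A^c = r0/(q^2 - q^-2) [A^b, A^a]_q + d I :
  for (a, b, c) = (dot, star, diamond) this is the definition, for the other two cyclic triples
  one solves the Askey-Wilson relation of the pair (A^a, A^b) for the third operator.
  On the eigenbasis |theta^b_M> of A^b, in which A^a is tridiagonal with entries A^(a,b), the
  q-commutator is again tridiagonal, with entries r0/(q^2 - q^-2) (q theta^b_N - q^-1 theta^b_M)
  A^(a,b)_{N,M} (plus d on the diagonal). Comparing these with A^(c,b) is a family of rational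
  identities in x = q^(2M) and q^(2s); the discrepancy in the off-diagonal entries is exactly the
  gauge factor g. The identities need the off-diagonal entries of A^(a,b) to be nonzero: the Leonard
  pair (A^a, A^b) forces A^b to have simple spectrum, so the eigenbasis |theta^b_M> is a rescaling of
  the one in which A^a is irreducible tridiagonal.
*)

lemma mat_vector_mult: "mat c *v (v::'a::semiring_1^'n) = c *s v"
  by (simp add: vec_eq_iff matrix_vector_mult_def mat_def if_distrib[of "\<lambda>x. x * _"] cong: if_cong)

lemma smat_vector_mult: "smat c X *v v = c *s (X *v v)"
  by (simp add: vec_eq_iff matrix_vector_mult_def smat_def sum_distrib_left mult.assoc)

lemma qbr_vector_mult:
  "qbr q X Y *v v = q *s (X *v (Y *v v)) - inverse q *s (Y *v (X *v v))"
  by (simp add: qbr_def matrix_vector_mult_diff_rdistrib smat_vector_mult matrix_vector_mul_assoc)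

lemma qbr_qbr_vector_mult:
  fixes q :: complex
  assumes "q \<noteq> 0"
  shows "qbr (inverse q) X (qbr q X Y) *v v
    = X *v (X *v (Y *v v)) + Y *v (X *v (X *v v)) - (q^2 + inverse q^2) *s (X *v (Y *v (X *v v)))"
  using assms
  by (simp add: qbr_vector_mult vec.diff vec.scale vec_eq_iff field_simps power2_eq_square)

section \<open>Bases, simple spectra and tridiagonal actions\<close>

lemma is_basis_independent:
  assumes "is_basis n v" and "(\<Sum>N\<in>{0..int n}. c N *s v N) = 0" and "M \<in> {0..int n}"
  shows "c M = 0"
  using assms unfolding is_basis_def by blast

lemma is_basis_spanning:
  assumes "is_basis n v"
  obtains c where "w = (\<Sum>N\<in>{0..int n}. c N *s v N)"
  using assms unfolding is_basis_def by blast

lemma sum_delta_smult: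
  fixes v :: "int \<Rightarrow> complex^'n"
  assumes "M \<in> {0..int n}"
  shows "(\<Sum>N\<in>{0..int n}. (if N = M then a else 0) *s v N) = a *s v M"
proof -
  have "(\<Sum>N\<in>{0..int n}. (if N = M then a else 0) *s v N) = (\<Sum>N\<in>{0..int n}. if N = M then a *s v N else 0)"
    by (rule sum.cong) (auto simp: vec_eq_iff)
  then show ?thesis using assms by (simp add: sum.delta)
qed

lemma is_basis_nonzero:
  assumes "is_basis n v" and M: "M \<in> {0..int n}"
  shows "v M \<noteq> 0"
proof
  assume "v M = 0"
  then have "(\<Sum>N\<in>{0..int n}. (if N = M then 1 else 0) *s v N) = 0"
    using sum_delta_smult[OF M, of 1 v] by simp
  from is_basis_independent[OF assms(1) this M] show False by simp
qed

lemma sum_smult_diff: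
  "(\<Sum>N\<in>S. f N *s v N) - (\<Sum>N\<in>S. g N *s v N) = (\<Sum>N\<in>S. (f N - g N) *s (v N :: 'a::ring^'n))"
  by (simp add: vec_eq_iff sum_subtractf algebra_simps)

lemma is_basis_coeff_unique:
  assumes "is_basis n v" and "(\<Sum>N\<in>{0..int n}. f N *s v N) = (\<Sum>N\<in>{0..int n}. g N *s v N)"
    and "M \<in> {0..int n}"
  shows "f M = g M"
proof -
  have "(\<Sum>N\<in>{0..int n}. (f N - g N) *s v N) = (\<Sum>N\<in>{0..int n}. f N *s v N) - (\<Sum>N\<in>{0..int n}. g N *s v N)"
    by (rule sum_smult_diff[symmetric])
  also have "\<dots> = 0" using assms(2) by simp
  finally have "(\<Sum>N\<in>{0..int n}. (f N - g N) *s v N) = 0" .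
  from is_basis_independent[OF assms(1) this assms(3)] show ?thesis by simp
qed

lemma sum_tridiagonal:
  fixes v :: "int \<Rightarrow> complex^'n"
  assumes out: "\<forall>N. N \<notin> {0..int n} \<longrightarrow> f N = 0"
    and band: "\<forall>N. N \<notin> {M-1, M, M+1} \<longrightarrow> f N = 0"
  shows "(\<Sum>N\<in>{0..int n}. f N *s v N) = f (M+1) *s v (M+1) + f M *s v M + f (M-1) *s v (M-1)"
proof -
  have "(\<Sum>N\<in>{0..int n}. f N *s v N) = (\<Sum>N\<in>{M-1, M, M+1}. f N *s v N)"
    by (rule sum.mono_neutral_cong) (use out band in auto)
  then show ?thesis by (simp add: algebra_simps)
qed

lemma matrix_action_on_basis_sum:
  fixes B :: "complex^'n^'n"
  assumes act: "\<forall>M\<in>{0..int n}. B *v u M = (\<Sum>N\<in>{0..int n}. x N M *s u N)"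
  shows "B *v (\<Sum>M\<in>{0..int n}. a M *s u M) = (\<Sum>N\<in>{0..int n}. (\<Sum>M\<in>{0..int n}. a M * x N M) *s u N)"
proof -
  have "B *v (\<Sum>M\<in>{0..int n}. a M *s u M) = (\<Sum>M\<in>{0..int n}. a M *s (\<Sum>N\<in>{0..int n}. x N M *s u N))"
    unfolding vec.sum vec.scale using act by simp
  also have "\<dots> = (\<Sum>N\<in>{0..int n}. (\<Sum>M\<in>{0..int n}. a M * x N M) *s u N)"
    by (simp only: vec_eq_iff sum_component vector_smult_component sum_distrib_left sum_distrib_right
        mult.assoc) (intro allI sum.swap)
  finally show ?thesis .
qed

fun shifted_product :: "complex^'n^'n \<Rightarrow> complex list \<Rightarrow> complex^'n^'n" where
  "shifted_product B [] = mat 1"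
| "shifted_product B (c # cs) = (B - mat c) ** shifted_product B cs"

lemma shifted_product_Cons_vector:
  "shifted_product B (c # cs) *v v = B *v (shifted_product B cs *v v) - c *s (shifted_product B cs *v v)"
  by (simp add: matrix_vector_mul_assoc[symmetric] matrix_vector_mult_diff_rdistrib mat_vector_mult)

lemma shifted_product_eigenvector:
  assumes "B *v w = \<mu> *s w"
  shows "shifted_product B cs *v w = (\<Prod>c\<leftarrow>cs. \<mu> - c) *s w"
proof (induction cs)
  case (Cons c cs)
  have "shifted_product B (c # cs) *v w = B *v ((\<Prod>c\<leftarrow>cs. \<mu> - c) *s w) - c *s ((\<Prod>c\<leftarrow>cs. \<mu> - c) *s w)"
    unfolding shifted_product_Cons_vector Cons.IH ..
  then show ?case using assms by (simp add: vec.scale vec_eq_iff algebra_simps)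
qed (simp add: vec_eq_iff)

lemma irr_tridiag_shift_step:
  fixes B :: "complex^'n^'n"
  assumes irr: "irr_tridiag_in n B u" and k: "0 \<le> k" "k < int n"
    and a_top: "\<forall>N\<in>{0..int n}. N > k \<longrightarrow> a N = 0" and a_k: "a k \<noteq> 0"
  obtains a' where "B *v (\<Sum>N\<in>{0..int n}. a N *s u N) - c *s (\<Sum>N\<in>{0..int n}. a N *s u N)
      = (\<Sum>N\<in>{0..int n}. a' N *s u N)"
    and "\<forall>N\<in>{0..int n}. N > k + 1 \<longrightarrow> a' N = 0" and "a' (k + 1) \<noteq> 0"
proof -
  obtain x where act: "\<forall>M\<in>{0..int n}. B *v u M = (\<Sum>N\<in>{0..int n}. x N M *s u N)"
    and band: "\<forall>M\<in>{0..int n}. \<forall>N\<in>{0..int n}. \<bar>N - M\<bar> > 1 \<longrightarrow> x N M = 0"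
    and sub: "\<forall>M\<in>{0..int n}. \<forall>N\<in>{0..int n}. \<bar>N - M\<bar> = 1 \<longrightarrow> x N M \<noteq> 0"
    using irr unfolding irr_tridiag_in_def by blast
  define a' where "a' N = (\<Sum>M\<in>{0..int n}. a M * x N M) - c * a N" for N
  have "B *v (\<Sum>N\<in>{0..int n}. a N *s u N) - c *s (\<Sum>N\<in>{0..int n}. a N *s u N)
      = (\<Sum>N\<in>{0..int n}. a' N *s u N)"
    unfolding matrix_action_on_basis_sum[OF act] a'_def sum_smult_diff[symmetric]
    by (simp add: vec_eq_iff sum_distrib_left mult.assoc)
  moreover have "\<forall>N\<in>{0..int n}. N > k + 1 \<longrightarrow> a' N = 0"
  proof (intro ballI impI)
    fix N assume N: "N \<in> {0..int n}" "N > k + 1"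
    have "a M * x N M = 0" if M: "M \<in> {0..int n}" for M
    proof (cases "M > k")
      case False
      then have "\<bar>N - M\<bar> > 1" using N by auto
      then show ?thesis using band M N by simp
    qed (use a_top M in simp)
    then have "(\<Sum>M\<in>{0..int n}. a M * x N M) = 0" by (intro sum.neutral) blast
    then show "a' N = 0" using N a_top by (simp add: a'_def)
  qed
  moreover have "a' (k + 1) \<noteq> 0"
  proof -
    have "a M * x (k+1) M = (if M = k then a k * x (k+1) k else 0)" if M: "M \<in> {0..int n}" for M
    proof (cases "M < k")
      case True
      then have "\<bar>k + 1 - M\<bar> > 1" by auto
      then show ?thesis using band M k True by simp
    qed (use a_top M in auto)
    then have "(\<Sum>M\<in>{0..int n}. a M * x (k+1) M) = (\<Sum>M\<in>{0..int n}. if M = k then a k * x (k+1) k else 0)"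
      by (intro sum.cong refl)
    also have "\<dots> = a k * x (k+1) k" using k by simp
    finally have "(\<Sum>M\<in>{0..int n}. a M * x (k+1) M) = a k * x (k+1) k" .
    moreover have "x (k+1) k \<noteq> 0" and "a (k+1) = 0" using sub a_top k by auto
    ultimately show ?thesis using a_k by (simp add: a'_def)
  qed
  ultimately show ?thesis by (rule that)
qed

lemma shifted_product_top_coeff:
  fixes B :: "complex^'n^'n"
  assumes irr: "irr_tridiag_in n B u" and "length cs \<le> n"
  shows "\<exists>a. shifted_product B cs *v u 0 = (\<Sum>N\<in>{0..int n}. a N *s u N)
    \<and> (\<forall>N\<in>{0..int n}. N > int (length cs) \<longrightarrow> a N = 0) \<and> a (int (length cs)) \<noteq> 0"
  using assms(2)
proof (induction cs)
  case Nil
  show ?case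
    using sum_delta_smult[of 0 n 1 u] by (intro exI[of _ "\<lambda>N. if N = 0 then 1 else 0"]) auto
next
  case (Cons c cs)
  let ?k = "int (length cs)"
  obtain a where a: "shifted_product B cs *v u 0 = (\<Sum>N\<in>{0..int n}. a N *s u N)"
    and a_top: "\<forall>N\<in>{0..int n}. N > ?k \<longrightarrow> a N = 0" and a_k: "a ?k \<noteq> 0"
    using Cons by auto
  obtain a' where a': "B *v (\<Sum>N\<in>{0..int n}. a N *s u N) - c *s (\<Sum>N\<in>{0..int n}. a N *s u N)
      = (\<Sum>N\<in>{0..int n}. a' N *s u N)"
    and "\<forall>N\<in>{0..int n}. N > ?k + 1 \<longrightarrow> a' N = 0" and "a' (?k + 1) \<noteq> 0"
    using irr_tridiag_shift_step[OF irr _ _ a_top a_k] Cons.prems by auto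
  moreover have "shifted_product B (c # cs) *v u 0 = (\<Sum>N\<in>{0..int n}. a' N *s u N)"
    unfolding shifted_product_Cons_vector a a' ..
  ultimately show ?case by (intro exI[of _ a']) (simp add: add.commute)
qed

text \<open>If B acts irreducibly tridiagonally on some basis, its minimal polynomial has degree n + 1,
  so an eigenbasis of B has pairwise distinct eigenvalues.\<close>

lemma irr_tridiag_eigenvalues_inj:
  fixes B :: "complex^'n^'n"
  assumes u: "is_basis n u" and irr: "irr_tridiag_in n B u"
    and w: "is_basis n w" and eig: "\<forall>M\<in>{0..int n}. B *v w M = \<mu> M *s w M"
  shows "inj_on \<mu> {0..int n}"
proof (rule inj_onI, rule ccontr)
  fix i j assume i: "i \<in> {0..int n}" and j: "j \<in> {0..int n}" and eq: "\<mu> i = \<mu> j" and "i \<noteq> j"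
  define cs where "cs = map \<mu> (sorted_list_of_set ({0..int n} - {j}))"
  have len: "length cs = n" using j by (simp add: cs_def)
  have "\<mu> K \<in> set cs" if "K \<in> {0..int n}" for K
  proof (cases "K = j")
    case True
    then have "\<mu> K = \<mu> i" and "i \<in> {0..int n} - {j}" using eq i \<open>i \<noteq> j\<close> by auto
    then show ?thesis unfolding cs_def by simp
  qed (use that in \<open>simp add: cs_def\<close>)
  then have "shifted_product B cs *v w K = 0" if "K \<in> {0..int n}" for K
    using shifted_product_eigenvector[of B "w K" "\<mu> K" cs] eig that
    by (simp add: prod_list_zero_iff)
  moreover obtain c where "u 0 = (\<Sum>M\<in>{0..int n}. c M *s w M)"
    using is_basis_spanning[OF w] .
  ultimately have "shifted_product B cs *v u 0 = 0"
    by (simp add: vec.sum vec.scale)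
  moreover obtain a where "shifted_product B cs *v u 0 = (\<Sum>N\<in>{0..int n}. a N *s u N)"
    and "a (int n) \<noteq> 0"
    using shifted_product_top_coeff[OF irr, of cs] len by auto
  ultimately show False
    using is_basis_independent[OF u, of a "int n"] by simp
qed

lemma eigenvector_multiple:
  fixes B :: "complex^'n^'n"
  assumes v: "is_basis n v" and eig: "\<forall>K\<in>{0..int n}. B *v v K = \<mu> K *s v K"
    and inj: "inj_on \<mu> {0..int n}" and M: "M \<in> {0..int n}" and ew: "B *v w = \<mu> M *s w"
  obtains l where "w = l *s v M"
proof -
  obtain c where c: "w = (\<Sum>K\<in>{0..int n}. c K *s v K)" using is_basis_spanning[OF v] .
  have "B *v w = (\<Sum>K\<in>{0..int n}. (c K * \<mu> K) *s v K)"
    unfolding c vec.sum vec.scale using eig by (intro sum.cong) (auto simp: vec_eq_iff)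
  moreover have "\<mu> M *s w = (\<Sum>K\<in>{0..int n}. (\<mu> M * c K) *s v K)"
    unfolding c by (simp add: vec_eq_iff sum_distrib_left mult.assoc)
  ultimately have e: "(\<Sum>K\<in>{0..int n}. (c K * \<mu> K) *s v K) = (\<Sum>K\<in>{0..int n}. (\<mu> M * c K) *s v K)"
    using ew by simp
  have "c K = 0" if K: "K \<in> {0..int n}" "K \<noteq> M" for K
  proof -
    have "c K * \<mu> K = \<mu> M * c K" using is_basis_coeff_unique[OF v e K(1)] .
    moreover have "\<mu> K \<noteq> \<mu> M" using inj K M by (meson inj_on_eq_iff)
    ultimately show ?thesis by (simp add: mult.commute)
  qed
  then have "w = (\<Sum>K\<in>{0..int n}. (if K = M then c M else 0) *s v K)"
    unfolding c by (intro sum.cong) auto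
  then have "w = c M *s v M" using sum_delta_smult[OF M] by simp
  then show ?thesis by (rule that)
qed

lemma irr_tridiag_offdiag_nonzero:
  fixes A B :: "complex^'n^'n"
  assumes v: "is_basis n v" and eig: "\<forall>K\<in>{0..int n}. B *v v K = \<mu> K *s v K"
    and inj: "inj_on \<mu> {0..int n}"
    and w: "eigenbasis_ord n B \<mu> w" and irr: "irr_tridiag_in n A w"
    and act: "\<forall>M\<in>{0..int n}. A *v v M = (\<Sum>N\<in>{0..int n}. X N M *s v N)"
    and M: "M \<in> {0..int n}" and N: "N \<in> {0..int n}" and adj: "\<bar>N - M\<bar> = 1"
  shows "X N M \<noteq> 0"
proof -
  have wb: "is_basis n w" and weig: "\<forall>M\<in>{0..int n}. B *v w M = \<mu> M *s w M"
    using w unfolding eigenbasis_ord_def by auto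
  obtain x where act_w: "\<forall>M\<in>{0..int n}. A *v w M = (\<Sum>N\<in>{0..int n}. x N M *s w N)"
    and sub: "\<forall>M\<in>{0..int n}. \<forall>N\<in>{0..int n}. \<bar>N - M\<bar> = 1 \<longrightarrow> x N M \<noteq> 0"
    using irr unfolding irr_tridiag_in_def by blast
  have "\<exists>l. w K = l *s v K" if "K \<in> {0..int n}" for K
    using eigenvector_multiple[OF v eig inj that] weig that by metis
  then obtain l where l: "\<forall>K\<in>{0..int n}. w K = l K *s v K" by metis
  have l_nz: "l K \<noteq> 0" if "K \<in> {0..int n}" for K
    using is_basis_nonzero[OF wb that] l that by auto
  have "A *v w M = l M *s (\<Sum>K\<in>{0..int n}. X K M *s v K)"
    using l act M by (simp add: vec.scale)
  also have "\<dots> = (\<Sum>K\<in>{0..int n}. (l M * X K M) *s v K)"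
    by (simp add: vec_eq_iff sum_distrib_left mult.assoc)
  moreover have "A *v w M = (\<Sum>K\<in>{0..int n}. (x K M * l K) *s v K)"
    using act_w M by (auto simp: l vec_eq_iff mult.assoc intro!: sum.cong)
  ultimately have "l M * X N M = x N M * l N"
    using is_basis_coeff_unique[OF v _ N] by metis
  moreover have "x N M * l N \<noteq> 0" using sub M N adj l_nz[OF N] by simp
  ultimately show ?thesis by auto
qed

text \<open>A Leonard pair forces the spectrum of its second operator to be simple, so any eigenbasis of it
  is a rescaling of the one in which the first operator is irreducible tridiagonal.\<close>

lemma leonard_pair_offdiag_nonzero:
  fixes A B :: "complex^'n^'n"
  assumes LP: "leonard_pair_ord n A B \<theta> \<mu>" and v: "is_basis n v"
    and eig: "\<forall>K\<in>{0..int n}. B *v v K = \<mu> K *s v K"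
    and tri: "\<forall>K\<in>{0..int n}. A *v v K = X (K+1) K *s v (K+1) + X K K *s v K + X (K-1) K *s v (K-1)"
    and out: "\<forall>N K. N \<notin> {0..int n} \<longrightarrow> X N K = 0"
  shows "\<forall>N\<in>{0..int n}. \<forall>K\<in>{0..int n}. \<bar>N - K\<bar> = 1 \<longrightarrow> X N K \<noteq> 0"
proof (intro ballI impI)
  fix N K assume N: "N \<in> {0..int n}" and K: "K \<in> {0..int n}" and adj: "\<bar>N - K\<bar> = 1"
  obtain u w where u: "eigenbasis_ord n A \<theta> u" and irr_u: "irr_tridiag_in n B u"
    and w: "eigenbasis_ord n B \<mu> w" and irr_w: "irr_tridiag_in n A w"
    using LP unfolding leonard_pair_ord_def by blast
  have inj: "inj_on \<mu> {0..int n}"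
    using irr_tridiag_eigenvalues_inj[OF _ irr_u v eig] u by (simp add: eigenbasis_ord_def)
  define X' where "X' N K = (if \<bar>N - K\<bar> \<le> 1 then X N K else 0)" for N K
  have "\<forall>K\<in>{0..int n}. A *v v K = (\<Sum>N\<in>{0..int n}. X' N K *s v N)"
  proof
    fix K assume "K \<in> {0..int n}"
    moreover have "(\<Sum>N\<in>{0..int n}. X' N K *s v N) = X' (K+1) K *s v (K+1) + X' K K *s v K + X' (K-1) K *s v (K-1)"
      by (rule sum_tridiagonal) (auto simp: X'_def out)
    ultimately show "A *v v K = (\<Sum>N\<in>{0..int n}. X' N K *s v N)"
      using tri by (simp add: X'_def)
  qed
  from irr_tridiag_offdiag_nonzero[OF v eig inj w irr_w this K N adj]
  show "X N K \<noteq> 0" by (simp add: X'_def adj)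
qed

lemma qcommutator_tridiagonal_action:
  fixes A B C :: "complex^'n^'n"
  assumes eig: "\<forall>K\<in>{0..int n}. B *v v K = \<theta> K *s v K" and M: "M \<in> {0..int n}"
    and tri: "A *v v M = X (M+1) M *s v (M+1) + X M M *s v M + X (M-1) M *s v (M-1)"
    and out: "\<forall>N. N \<notin> {0..int n} \<longrightarrow> X N M = 0"
    and C: "C *v v M = k *s (q *s (B *v (A *v v M)) - inverse q *s (A *v (B *v v M))) + d *s v M"
  shows "C *v v M = (k * (q * \<theta> (M+1) - inverse q * \<theta> M) * X (M+1) M) *s v (M+1)
      + (k * (q * \<theta> M - inverse q * \<theta> M) * X M M + d) *s v M
      + (k * (q * \<theta> (M-1) - inverse q * \<theta> M) * X (M-1) M) *s v (M-1)"
proof -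
  have B_term: "B *v (X N M *s v N) = (X N M * \<theta> N) *s v N" for N
    using eig out by (cases "N \<in> {0..int n}") (simp_all add: vec.scale vector_smult_assoc mult.commute)
  have BA: "B *v (A *v v M) = (X (M+1) M * \<theta> (M+1)) *s v (M+1) + (X M M * \<theta> M) *s v M
      + (X (M-1) M * \<theta> (M-1)) *s v (M-1)"
    unfolding tri by (simp add: vec.add B_term)
  have AB: "A *v (B *v v M) = \<theta> M *s (A *v v M)"
    using eig M by (simp add: vec.scale)
  show ?thesis
    unfolding C BA AB unfolding tri by (simp add: vec_eq_iff algebra_simps)
qed

section \<open>The third operator as a q-commutator\<close>

text \<open>If R = k [P, Q]_q + d I, then [R, P]_q = - k [P, [P, Q]_q]_(q^-1) + (q - q^-1) d P. By the
  Askey-Wilson relation for (P, Q), the choice d (q - q^-1) = k w cancels the P-terms and leaves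
  Q = k [R, P]_q + a scalar. Here a1, a2, a3 stand for P P Q v, P Q P v, Q P P v.\<close>

lemma qcommutator_inversion:
  fixes a1 a2 a3 y z t :: "complex^'n"
  assumes q: "q \<noteq> 0" and p: "q^2 - inverse q^2 \<noteq> 0" and r0: "r0 \<noteq> 0"
    and rel: "a1 + a3 - (q^2 + inverse q^2) *s a2
      = (- ((q^2 - inverse q^2)^2 / r0^2)) *s y + w *s z + ((q + inverse q) / r0 * e) *s t"
  defines "k \<equiv> r0 / (q^2 - inverse q^2)"
    and "d \<equiv> \<lambda>u. r0 * u / ((q - inverse q) * (q^2 - inverse q^2))"
  shows "y = k *s (q *s (k *s (q *s a2 - inverse q *s a3) + d w *s z)
                  - inverse q *s (k *s (q *s a1 - inverse q *s a2) + d w *s z)) + d e *s t"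
proof -
  have pq: "q^2 - inverse q^2 = (q - inverse q) * (q + inverse q)"
    by (simp add: power2_eq_square algebra_simps)
  have q1: "q - inverse q \<noteq> 0" and qq: "q + inverse q \<noteq> 0"
    using p unfolding pq by auto
  have qinv: "q * inverse q = 1" using q by simp
  have k2: "k^2 * ((q^2 - inverse q^2)^2 / r0^2) = 1"
    using p r0 unfolding k_def by (simp add: power_divide)
  have kd: "d w * (q - inverse q) = k * w"
    using q1 unfolding k_def d_def by simp
  have "r0 * e / (s * (s * t)) = (r0 / (s * t))^2 * (t / r0 * e)" if "s \<noteq> 0" "t \<noteq> 0" for s t
    using that r0 by (simp add: field_simps power2_eq_square)
  then have de: "d e = k^2 * ((q + inverse q) / r0 * e)"
    using q1 qq unfolding k_def d_def pq by simp
  show ?thesis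
  proof (rule vec_eq_iff[THEN iffD2], rule allI)
    fix i
    have h: "a1$i + a3$i - (q^2 + inverse q^2) * a2$i
        = - ((q^2 - inverse q^2)^2 / r0^2) * y$i + w * z$i + (q + inverse q) / r0 * e * t$i"
      using arg_cong[OF rel, of "\<lambda>v. v $ i"] by (simp add: algebra_simps)
    have "y $ i = k * (q * (k * (q * a2 $ i - inverse q * a3 $ i) + d w * z $ i)
        - inverse q * (k * (q * a1 $ i - inverse q * a2 $ i) + d w * z $ i)) + d e * t $ i"
      unfolding de using h k2 kd qinv by algebra
    then show "y $ i = (k *s (q *s (k *s (q *s a2 - inverse q *s a3) + d w *s z)
        - inverse q *s (k *s (q *s a1 - inverse q *s a2) + d w *s z)) + d e *s t) $ i"
      by (simp add: algebra_simps)
  qed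
qed

lemma omega_swap: "omega q n r0 bb cc x y z = omega q n r0 bb cc y x z"
  unfolding omega_def by (simp add: mult.commute)

lemma cyclic_qcommutator_formula:
  fixes A :: "label \<Rightarrow> complex^'n^'n"
  assumes q: "q \<noteq> 0" and p: "q^2 - inverse q^2 \<noteq> 0" and r0: "r0 \<noteq> 0"
    and A_dia: "A Dia = smat (r0 / (q^2 - inverse q^2)) (qbr q (A Star) (A Dot))
        + smat (r0 * omega q n r0 bb cc Dot Star Dia / ((q - inverse q) * (q^2 - inverse q^2))) (mat 1)"
    and AW: "\<forall>x y z. distinct [x, y, z] \<longrightarrow>
        qbr (inverse q) (A x) (qbr q (A x) (A y))
          = smat (- ((q^2 - inverse q^2)^2 / r0^2)) (A y)
            + smat (omega q n r0 bb cc x y z) (A x)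
            + smat ((q + inverse q) / r0 * omega q n r0 bb cc x z y) (mat 1)"
    and cyc: "cyclic a b c"
  shows "A c *v v = (r0 / (q^2 - inverse q^2)) *s (q *s (A b *v (A a *v v)) - inverse q *s (A a *v (A b *v v)))
      + (r0 * omega q n r0 bb cc a b c / ((q - inverse q) * (q^2 - inverse q^2))) *s v"
proof -
  define k where "k = r0 / (q^2 - inverse q^2)"
  define d where "d u = r0 * u / ((q - inverse q) * (q^2 - inverse q^2))" for u
  define \<omega> where "\<omega> x y z = omega q n r0 bb cc x y z" for x y z
  let ?P = "A Star" and ?Q = "A Dot" and ?R = "A Dia"
  have R: "?R *v u = k *s (q *s (?P *v (?Q *v u)) - inverse q *s (?Q *v (?P *v u))) + d (\<omega> Dot Star Dia) *s u" for u
    unfolding A_dia k_def d_def \<omega>_def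
    by (simp add: matrix_vector_mult_add_rdistrib smat_vector_mult qbr_vector_mult)
  have AW_vec: "A x *v (A x *v (A y *v u)) + A y *v (A x *v (A x *v u)) - (q^2 + inverse q^2) *s (A x *v (A y *v (A x *v u)))
      = (- ((q^2 - inverse q^2)^2 / r0^2)) *s (A y *v u) + \<omega> x y z *s (A x *v u)
        + ((q + inverse q) / r0 * \<omega> x z y) *s u"
    if "distinct [x, y, z]" for x y z u
    using arg_cong[OF AW[rule_format, OF that], of "\<lambda>X. X *v u"] q unfolding \<omega>_def
    by (simp add: qbr_qbr_vector_mult matrix_vector_mult_add_rdistrib smat_vector_mult)
  from cyc consider "(a, b, c) = (Dot, Star, Dia)" | "(a, b, c) = (Star, Dia, Dot)" | "(a, b, c) = (Dia, Dot, Star)"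
    unfolding cyclic_def by auto
  then show ?thesis
  proof cases
    case 1
    then show ?thesis using R unfolding k_def d_def \<omega>_def by auto
  next
    case 2
    have PR: "?P *v (?R *v v) = k *s (q *s (?P *v (?P *v (?Q *v v))) - inverse q *s (?P *v (?Q *v (?P *v v))))
        + d (\<omega> Dot Star Dia) *s (?P *v v)"
      by (simp add: R vec.add vec.diff vec.scale)
    have "?Q *v v = k *s (q *s (?R *v (?P *v v)) - inverse q *s (?P *v (?R *v v))) + d (\<omega> Star Dia Dot) *s v"
      unfolding PR unfolding R omega_swap[of q n r0 bb cc Dot] \<omega>_def k_def d_def
      by (rule qcommutator_inversion[OF q p r0 AW_vec[of Star Dot Dia, unfolded \<omega>_def]]) simp
    then show ?thesis using 2 unfolding k_def d_def \<omega>_def by auto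
  next
    case 3
    have QR: "?Q *v (?R *v v) = k *s (q *s (?Q *v (?P *v (?Q *v v))) - inverse q *s (?Q *v (?Q *v (?P *v v))))
        + d (\<omega> Dot Star Dia) *s (?Q *v v)"
      by (simp add: R vec.add vec.diff vec.scale)
    have AW_QP: "?P *v (?Q *v (?Q *v v)) + ?Q *v (?Q *v (?P *v v)) - (q^2 + inverse q^2) *s (?Q *v (?P *v (?Q *v v)))
      = (- ((q^2 - inverse q^2)^2 / r0^2)) *s (?P *v v) + \<omega> Dot Star Dia *s (?Q *v v)
        + ((q + inverse q) / r0 * \<omega> Dot Dia Star) *s v"
      using AW_vec[of Dot Star Dia v] by (simp add: add.commute)
    have "?P *v v = k *s (q *s (?Q *v (?R *v v)) - inverse q *s (?R *v (?Q *v v))) + d (\<omega> Dot Dia Star) *s v"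
      unfolding QR unfolding R \<omega>_def k_def d_def
      by (rule qcommutator_inversion[OF q p r0 AW_QP[unfolded \<omega>_def]])
    then show ?thesis using 3 omega_swap[of q n r0 bb cc Dot Dia Star] unfolding k_def d_def \<omega>_def by auto
  qed
qed

section \<open>Rational identities behind the coefficients\<close>

lemma powi_numeral_mult: "(q::complex) powi (numeral k * M) = (q powi M) ^ numeral k"
  by (metis mult.commute power_int_mult power_int_of_nat of_nat_numeral)

lemma powi_neg_numeral_mult: "(q::complex) \<noteq> 0 \<Longrightarrow> q powi (- numeral k * M) = inverse ((q powi M) ^ numeral k)"
  by (metis mult_minus_left powi_numeral_mult power_int_minus)

lemma powi_add_nz: "(q::complex) \<noteq> 0 \<Longrightarrow> q powi (a + b) = q powi a * q powi b"
  by (simp add: power_int_add)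

lemma powi_diff_nz: "(q::complex) \<noteq> 0 \<Longrightarrow> q powi (a - b) = q powi a / q powi b"
  by (simp add: power_int_diff)

lemmas powi_simps = distrib_left right_diff_distrib powi_add_nz powi_diff_nz powi_numeral_mult
  powi_neg_numeral_mult mult_1_right power_int_minus power_int_of_nat power_int_1_right
  power_int_numeral not_False_eq_True

lemma powi_in_x_s:
  fixes q :: complex and M :: int and n :: nat
  assumes q: "q \<noteq> 0"
  assumes x_def: "x = q powi (2*M)" and s_def: "s = q ^ n"
  shows "q powi (2*(M+1)) = x*q^2" "q powi (-2*(M+1)) = inverse (x*q^2)" "q powi (-2*M) = inverse x"
    "q powi (- 2 * int n) = inverse (s^2)" "q powi (2 * int n - 1) = s^2/q" "q powi (2*(M+1)-2) = x" "q powi (2 * int n) = s^2"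
    "q powi (- 1) = inverse q" "q powi (4*M) = x^2" "q powi (2 - 2 * int n) = q^2/s^2" "q powi (2*(M+1) + 2*int n) = x*q^2* s^2"
    "q powi (4*(M+1)-2) = x^2*q^2" "q powi (4*(M+1)) = x^2*q^4"
    "q powi (2*(M+1) - 2*int n - 2) = x/s^2" "q powi (2*(M+1)+2*int n-1) = x* s^2*q" "q powi (2*(M+1)-1) = x*q"
    "q powi (4*(M+1)-4) = x^2" "q powi (2*M + 2*int n) = x* s^2" "q powi (2*M-2) = x/q^2"
    "q powi (4*M-2) = x^2/q^2" "q powi (int n) = s" "q powi (- int n) = inverse s" "q powi (int n + 1) = s*q" "q powi (- int n - 1) = inverse (s*q)"
    "q powi (2*M - 2*int n - 2) = x/(s^2*q^2)" "q powi (2*M + 2*int n - 1) = x* s^2/q" "q powi (2*M-1) = x/q" "q powi (4*M-4) = x^2/q^4"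
    "q powi (2*(M-1)) = x/q^2" "q powi (-2*(M-1)) = q^2/x" "q powi (4*(M-1)) = x^2/q^4"
  unfolding x_def s_def using q
  by (simp_all only: powi_simps q)
    (simp_all add: q field_simps power_mult_distrib power2_eq_square power4_eq_xxxx flip: power_mult)

lemma scaled_quotient_mult_eq:
  fixes g :: complex
  assumes h: "K*f3*f4 = f3'*f4'*g"
  shows "K * (p*a*b*f3*f4/D) = (p*a*b*f3'*f4'/D)*g"
proof -
  have "K * (p*a*b*f3*f4/D) = (p*a*b/D) * (K*f3*f4)" by (simp add: field_simps)
  also have "\<dots> = (p*a*b/D) * (f3'*f4'*g)" by (simp only: h)
  also have "\<dots> = (p*a*b*f3'*f4'/D)*g" by (simp add: field_simps)
  finally show ?thesis .
qed

lemma scaled_quotient_div_eq: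
  fixes g :: complex
  assumes h: "K*f3*f4 = f3'*f4'/g"
  shows "K * (a*b*f3*f4/D) = (a*b*f3'*f4'/D)/g"
proof -
  have "K * (a*b*f3*f4/D) = (a*b/D) * (K*f3*f4)" by (simp add: field_simps)
  also have "\<dots> = (a*b/D) * (f3'*f4'/g)" by (simp only: h)
  also have "\<dots> = (a*b*f3'*f4'/D)/g" by (simp add: field_simps)
  finally show ?thesis .
qed

lemma scaled_qdiff_eq:
  fixes q r0 T :: complex
  assumes q: "q \<noteq> 0" and qq: "q^2 + 1 \<noteq> 0" and q1: "q - inverse q \<noteq> 0"
  shows "r0 / (q^2 - inverse q^2) * (q * T - inverse q * T) = r0 * T * q / (q^2+1)"
proof -
  have a: "q * T - inverse q * T = (q - inverse q) * T" by (simp add: algebra_simps)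
  have b: "q^2 - inverse q^2 = (q - inverse q) * (q + inverse q)" by (simp add: algebra_simps power2_eq_square)
  have c: "q + inverse q = (q^2+1)/q" using q by (simp add: field_simps power2_eq_square)
  have "r0 / (q^2 - inverse q^2) * (q * T - inverse q * T) = r0 * T / (q + inverse q)"
    unfolding a b using q1 by simp
  also have "\<dots> = r0 * T * q / (q^2+1)" unfolding c using q qq by simp
  finally show ?thesis .
qed

lemma scaled_omega_eq:
  fixes q r0 W :: complex
  assumes q: "q \<noteq> 0" and qq: "q^2 + 1 \<noteq> 0" and q1: "q - inverse q \<noteq> 0"
  shows "r0 * (- ((q - inverse q)^2) * W) / ((q - inverse q) * (q^2 - inverse q^2)) = - (r0 * W * q / (q^2+1))"
proof -
  have b: "q^2 - inverse q^2 = (q - inverse q) * (q + inverse q)" by (simp add: algebra_simps power2_eq_square)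
  have c: "q + inverse q = (q^2+1)/q" using q by (simp add: field_simps power2_eq_square)
  have "r0 * (- ((q - inverse q)^2) * W) / ((q - inverse q) * (q^2 - inverse q^2)) = - (r0 * W / (q + inverse q))"
    unfolding b using q1 by (simp add: power2_eq_square)
  also have "\<dots> = - (r0 * W * q / (q^2+1))" unfolding c using q qq by simp
  finally show ?thesis .
qed

text \<open>In the identities below B, C stand for b^b, c^b, and \<alpha>, \<gamma>, \<beta>, \<delta> for b^a, c^a, b^c, c^c
  (so each c-parameter is 1/(r0^2 b)); x stands for q^(2M) and s for q^(2s) = q^n. An entry of A^(a,b)
  and the entry of A^(c,b) in the same position share all factors except the last two, and the
  identities compare these last two factors.\<close>

lemma subdiag_factor_identity:
  fixes q x y r0 B C \<alpha> \<gamma> \<beta> \<delta> :: complex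
  assumes q: "q \<noteq> 0" and q2: "q^2 - inverse q^2 \<noteq> 0" and x: "x \<noteq> 0"
    and y: "y \<noteq> 0" and r0: "r0 \<noteq> 0" and B: "B \<noteq> 0"
    and \<alpha>: "\<alpha> \<noteq> 0" and \<beta>: "\<beta> \<noteq> 0"
    and C: "C = inverse (r0^2 * B)" and \<gamma>: "\<gamma> = inverse (r0^2*\<alpha>)"
    and \<delta>: "\<delta> = inverse (r0^2*\<beta>)"
    and gd: "B * x + r0 * inverse q * \<gamma> * \<beta> \<noteq> 0"
  shows "r0 / (q^2 - inverse q^2) * (q * (B * (x*q^2) + C * inverse (x*q^2)) - inverse q * (B * x + C * inverse x))
      * (\<alpha>*(inverse y * \<delta>)*r0*(y/q) + B*x)
      * (C*(y * \<beta>)*r0*inverse q + \<gamma>*x)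
    = (\<beta>*\<alpha>*r0*(y/q) + B*x) * (C*\<gamma>*r0*inverse q + \<delta>*x) *
      (x^2 * (B / C) * (C * inverse x + r0*q*\<gamma>*\<beta>) / (B * x + r0 * inverse q * \<gamma> * \<beta>))"
proof -
  have K: "r0 / (q^2 - inverse q^2) * (q * (B * (x*q^2) + C * inverse (x*q^2)) - inverse q * (B * x + C * inverse x)) = r0*B*q*x"
  proof -
    have "q * (B * (x*q^2) + C * inverse (x*q^2)) - inverse q * (B * x + C * inverse x) = (q^2 - inverse q^2) * (B*q*x)"
      using q x by (simp add: field_simps power2_eq_square)
    thus ?thesis using q2 by simp
  qed
  have main: "r0*B*q*x * (\<alpha>*(inverse y * \<delta>)*r0*(y/q) + B*x) * (C*(y * \<beta>)*r0*inverse q + \<gamma>*x) * (B * x + r0 * inverse q * \<gamma> * \<beta>)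
     = (\<beta>*\<alpha>*r0*(y/q) + B*x) * (C*\<gamma>*r0*inverse q + \<delta>*x) * (x^2 * (B / C) * (C * inverse x + r0*q*\<gamma>*\<beta>))"
    using q x y r0 B \<alpha> \<beta> unfolding C \<gamma> \<delta>
    by (simp add: field_simps) algebra
  have L: "r0*B*q*x * (\<alpha>*(inverse y * \<delta>)*r0*(y/q) + B*x) * (C*(y * \<beta>)*r0*inverse q + \<gamma>*x)
     = (\<beta>*\<alpha>*r0*(y/q) + B*x) * (C*\<gamma>*r0*inverse q + \<delta>*x) * (x^2 * (B / C) * (C * inverse x + r0*q*\<gamma>*\<beta>)) / (B * x + r0 * inverse q * \<gamma> * \<beta>)"
    by (subst nonzero_eq_divide_eq[OF gd]) (rule main)
  show ?thesis unfolding K using L by (simp only: times_divide_eq_right)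
qed

lemma superdiag_factor_identity:
  fixes q x s r0 B C \<alpha> \<gamma> \<beta> \<delta> :: complex
  assumes q: "q \<noteq> 0" and q2: "q^2 - inverse q^2 \<noteq> 0" and x: "x \<noteq> 0"
    and s: "s \<noteq> 0" and r0: "r0 \<noteq> 0" and B: "B \<noteq> 0"
    and \<alpha>: "\<alpha> \<noteq> 0" and \<beta>: "\<beta> \<noteq> 0"
    and C: "C = inverse (r0^2 * B)" and \<gamma>: "\<gamma> = inverse (r0^2*\<alpha>)"
    and \<delta>: "\<delta> = inverse (r0^2*\<beta>)"
    and gn: "C * (q^2/x) + r0*q*\<gamma>*\<beta> \<noteq> 0"
    and gd: "B * (x/q^2) + r0 * inverse q * \<gamma> * \<beta> \<noteq> 0"
  shows "r0 / (q^2 - inverse q^2) * (q * (B * (x/q^2) + C * (q^2/x)) - inverse q * (B * x + C * inverse x))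
      * (C + \<alpha>*(inverse (s^2) * \<delta>)*r0*(x* s^2/q))
      * (\<gamma> + B*(s^2 * \<beta>)*r0*(x/q))
    = (C + \<beta>*\<alpha>*r0*(x* s^2/q)) * (\<delta> + B*\<gamma>*r0*(x/q)) /
      (x^2/q^4 * (B / C) * (C * (q^2/x) + r0*q*\<gamma>*\<beta>) / (B * (x/q^2) + r0 * inverse q * \<gamma> * \<beta>))"
proof -
  have K: "r0 / (q^2 - inverse q^2) * (q * (B * (x/q^2) + C * (q^2/x)) - inverse q * (B * x + C * inverse x)) = r0*C*q/x"
  proof -
    have "q * (B * (x/q^2) + C * (q^2/x)) - inverse q * (B * x + C * inverse x) = (q^2 - inverse q^2) * (C*q/x)"
      using q x by (simp add: field_simps power2_eq_square)
    thus ?thesis using q2 by simp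
  qed
  have Cn: "C \<noteq> 0" using C r0 B by simp
  have P: "x^2/q^4 * (B / C) * (C * (q^2/x) + r0*q*\<gamma>*\<beta>) \<noteq> 0" using q x B Cn gn by simp
  have main: "r0*C*q/x * (C + \<alpha>*(inverse (s^2) * \<delta>)*r0*(x* s^2/q)) * (\<gamma> + B*(s^2 * \<beta>)*r0*(x/q)) * (x^2/q^4 * (B / C) * (C * (q^2/x) + r0*q*\<gamma>*\<beta>))
     = (C + \<beta>*\<alpha>*r0*(x* s^2/q)) * (\<delta> + B*\<gamma>*r0*(x/q)) * (B * (x/q^2) + r0 * inverse q * \<gamma> * \<beta>)"
    using q x s r0 B \<alpha> \<beta> unfolding C \<gamma> \<delta>
    by (simp add: field_simps) algebra
  have "r0*C*q/x * (C + \<alpha>*(inverse (s^2) * \<delta>)*r0*(x* s^2/q)) * (\<gamma> + B*(s^2 * \<beta>)*r0*(x/q))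
     = (C + \<beta>*\<alpha>*r0*(x* s^2/q)) * (\<delta> + B*\<gamma>*r0*(x/q)) * (B * (x/q^2) + r0 * inverse q * \<gamma> * \<beta>) / (x^2/q^4 * (B / C) * (C * (q^2/x) + r0*q*\<gamma>*\<beta>))"
    by (subst nonzero_eq_divide_eq[OF P]) (rule main)
  thus ?thesis unfolding K by (simp only: divide_divide_eq_right times_divide_eq_left)
qed

lemma upper_defect_identity:
  fixes q x s r0 B C \<alpha> \<gamma> \<beta> \<delta> :: complex
  assumes q: "q \<noteq> 0" and qq: "q^2 + 1 \<noteq> 0" and q1: "q - inverse q \<noteq> 0"
    and x: "x \<noteq> 0" and s: "s \<noteq> 0" and r0: "r0 \<noteq> 0" and B: "B \<noteq> 0"
    and \<alpha>: "\<alpha> \<noteq> 0" and \<beta>: "\<beta> \<noteq> 0"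
    and C: "C = inverse (r0^2 * B)" and \<gamma>: "\<gamma> = inverse (r0^2*\<alpha>)"
    and \<delta>: "\<delta> = inverse (r0^2*\<beta>)"
  shows "r0 / (q^2 - inverse q^2) * (q * (B * x + C * inverse x) - inverse q * (B * x + C * inverse x))
      * ((C + \<alpha>*(inverse (s^2) * \<delta>)*r0*(x* s^2*q)) * (\<gamma> + B*(s^2 * \<beta>)*r0*(x*q)))
      - (C + \<beta>*\<alpha>*r0*(x* s^2*q)) * (\<delta> + B*\<gamma>*r0*(x*q))
    = (C - B*(x^2*q^2)) * (- 1/(r0^2*\<beta>) + q/(x*r0^3*B*\<alpha>) - q*x* s^2*r0*B*\<alpha> + q^2* s^2*\<beta>) / (q^2+1)"
proof -
  have main: "r0*(B*x + C*inverse x)*q * ((C + \<alpha>*(inverse (s^2) * \<delta>)*r0*(x* s^2*q)) * (\<gamma> + B*(s^2 * \<beta>)*r0*(x*q)))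
      - (q^2+1) * ((C + \<beta>*\<alpha>*r0*(x* s^2*q)) * (\<delta> + B*\<gamma>*r0*(x*q)))
    = (C - B*(x^2*q^2)) * (- 1/(r0^2*\<beta>) + q/(x*r0^3*B*\<alpha>) - q*x* s^2*r0*B*\<alpha> + q^2* s^2*\<beta>)"
    using q x s r0 B \<alpha> \<beta> unfolding C \<gamma> \<delta>
    by (simp add: field_simps) algebra
  show ?thesis unfolding scaled_qdiff_eq[OF q qq q1] using main qq by (simp add: field_simps)
qed

lemma common_denominator_diff_mult: "(p::complex) \<noteq> 0 \<Longrightarrow> (a/p*u + -(b/p) - c)*D = ((a*u - b - p*c)*D)/p"
  by (simp add: field_simps)
lemma common_denominator_diff: "(p::complex) \<noteq> 0 \<Longrightarrow> a/p*F - G = (a*F - p*G)/p"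
  by (simp add: field_simps)
lemma common_denominator_add_neg: "(p::complex) \<noteq> 0 \<Longrightarrow> a/p*u + -(b/p) = (a*u - b)/p"
  by (simp add: field_simps)

lemma lower_defect_identity:
  fixes q x s r0 B C \<alpha> \<gamma> \<beta> \<delta> :: complex
  assumes q: "q \<noteq> 0" and qq: "q^2 + 1 \<noteq> 0" and q1: "q - inverse q \<noteq> 0"
    and x: "x \<noteq> 0" and s: "s \<noteq> 0" and r0: "r0 \<noteq> 0" and B: "B \<noteq> 0"
    and \<alpha>: "\<alpha> \<noteq> 0" and \<beta>: "\<beta> \<noteq> 0"
    and C: "C = inverse (r0^2 * B)" and \<gamma>: "\<gamma> = inverse (r0^2*\<alpha>)"
    and \<delta>: "\<delta> = inverse (r0^2*\<beta>)"
  shows "r0 / (q^2 - inverse q^2) * (q * (B * x + C * inverse x) - inverse q * (B * x + C * inverse x))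
      * ((\<alpha>*(inverse (s^2) * \<delta>)*r0*(s^2/q) + B*(x/q^2)) * (C*(s^2*\<beta>)*r0*inverse q + \<gamma>*(x/q^2)))
      - (\<beta>*\<alpha>*r0*(s^2/q) + B*(x/q^2)) * (C*\<gamma>*r0*inverse q + \<delta>*(x/q^2))
    = (C - B*(x^2/q^2)) * (1/(q^2*r0^2*\<beta>) + s^2*\<alpha>/(q*x*r0*B) - x*B/(q*r0*\<alpha>) - s^2*\<beta>) / (q^2+1)"
proof -
  have main: "r0*(B*x + C*inverse x)*q * ((\<alpha>*(inverse (s^2) * \<delta>)*r0*(s^2/q) + B*(x/q^2)) * (C*(s^2*\<beta>)*r0*inverse q + \<gamma>*(x/q^2)))
      - (q^2+1) * ((\<beta>*\<alpha>*r0*(s^2/q) + B*(x/q^2)) * (C*\<gamma>*r0*inverse q + \<delta>*(x/q^2)))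
    = (C - B*(x^2/q^2)) * (1/(q^2*r0^2*\<beta>) + s^2*\<alpha>/(q*x*r0*B) - x*B/(q*r0*\<alpha>) - s^2*\<beta>)"
    using q x s r0 B \<alpha> \<beta> unfolding C \<gamma> \<delta>
    by (simp add: field_simps) algebra
  show ?thesis unfolding scaled_qdiff_eq[OF q qq q1] common_denominator_diff[OF qq] main ..
qed

lemma diag_constant_identity:
  fixes q x s r0 B C \<alpha> \<gamma> \<beta> \<delta> :: complex
  assumes q: "q \<noteq> 0" and qq: "q^2 + 1 \<noteq> 0" and q1: "q - inverse q \<noteq> 0"
    and x: "x \<noteq> 0" and s: "s \<noteq> 0" and r0: "r0 \<noteq> 0" and B: "B \<noteq> 0"
    and \<alpha>: "\<alpha> \<noteq> 0" and \<beta>: "\<beta> \<noteq> 0"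
    and C: "C = inverse (r0^2 * B)" and \<gamma>: "\<gamma> = inverse (r0^2*\<alpha>)"
    and \<delta>: "\<delta> = inverse (r0^2*\<beta>)"
  shows "(r0 / (q^2 - inverse q^2) * (q * (B * x + C * inverse x) - inverse q * (B * x + C * inverse x)) * (\<alpha> + \<gamma>)
       + r0 * (- ((q - inverse q)^2) * ((\<alpha>* s + \<gamma>*inverse s)*(B* s + C*inverse s) - inverse r0*(s*q + inverse (s*q))*(\<beta>* s + \<delta>*inverse s))) / ((q - inverse q) * (q^2 - inverse q^2))
       - (\<beta> + \<delta>)) * (C - B*x^2)
    = ((1 - x/s^2)*(C - B*x)*(- 1/(r0^2*\<beta>) + q/(x*r0^3*B*\<alpha>) - q*x* s^2*r0*B*\<alpha> + q^2* s^2*\<beta>)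
       + q^2/s^2*(1-x)*(C - B*(x* s^2))*(1/(q^2*r0^2*\<beta>) + s^2*\<alpha>/(q*x*r0*B) - x*B/(q*r0*\<alpha>) - s^2*\<beta>)) / (q^2+1)"
proof -
  have main: "(r0*(B*x + C*inverse x)*q * (\<alpha> + \<gamma>)
       - r0 * ((\<alpha>* s + \<gamma>*inverse s)*(B* s + C*inverse s) - inverse r0*(s*q + inverse (s*q))*(\<beta>* s + \<delta>*inverse s)) * q
       - (q^2+1) * (\<beta> + \<delta>)) * (C - B*x^2)
    = ((1 - x/s^2)*(C - B*x)*(- 1/(r0^2*\<beta>) + q/(x*r0^3*B*\<alpha>) - q*x* s^2*r0*B*\<alpha> + q^2* s^2*\<beta>)
       + q^2/s^2*(1-x)*(C - B*(x* s^2))*(1/(q^2*r0^2*\<beta>) + s^2*\<alpha>/(q*x*r0*B) - x*B/(q*r0*\<alpha>) - s^2*\<beta>))"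
    using q x s r0 B \<alpha> \<beta> unfolding C \<gamma> \<delta>
    by (simp add: field_simps) algebra
  show ?thesis unfolding scaled_qdiff_eq[OF q qq q1] scaled_omega_eq[OF q qq q1] common_denominator_diff_mult[OF qq] main ..
qed

lemma diag_constant_identity_dim0:
  fixes q r0 B C \<alpha> \<gamma> \<beta> \<delta> :: complex
  assumes q: "q \<noteq> 0" and qq: "q^2 + 1 \<noteq> 0" and q1: "q - inverse q \<noteq> 0"
    and r0: "r0 \<noteq> 0" and B: "B \<noteq> 0" and \<alpha>: "\<alpha> \<noteq> 0"
    and \<beta>: "\<beta> \<noteq> 0"
    and C: "C = inverse (r0^2 * B)" and \<gamma>: "\<gamma> = inverse (r0^2*\<alpha>)"
    and \<delta>: "\<delta> = inverse (r0^2*\<beta>)"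
  shows "r0 / (q^2 - inverse q^2) * (q * (B * 1 + C * inverse 1) - inverse q * (B * 1 + C * inverse 1)) * (\<alpha> + \<gamma>)
       + r0 * (- ((q - inverse q)^2) * ((\<alpha>*1 + \<gamma>*inverse 1)*(B*1 + C*inverse 1) - inverse r0*(1*q + inverse (1*q))*(\<beta>*1 + \<delta>*inverse 1))) / ((q - inverse q) * (q^2 - inverse q^2))
       = \<beta> + \<delta>"
proof -
  have main: "r0*(B*1 + C*inverse 1)*q * (\<alpha> + \<gamma>)
       - r0 * ((\<alpha>*1 + \<gamma>*inverse 1)*(B*1 + C*inverse 1) - inverse r0*(1*q + inverse (1*q))*(\<beta>*1 + \<delta>*inverse 1)) * q
       = (q^2+1) * (\<beta> + \<delta>)"
    using q r0 B \<alpha> \<beta> unfolding C \<gamma> \<delta>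
    by (simp add: field_simps) algebra
  show ?thesis unfolding scaled_qdiff_eq[OF q qq q1] scaled_omega_eq[OF q qq q1] common_denominator_add_neg[OF qq] main using qq by simp
qed

lemma upper_part_from_defect:
  fixes D2 :: complex
  assumes D2: "D2 \<noteq> 0" and h: "K*(f3*f4) - f3'*f4' = D2*G/Q"
  shows "K*(a*b*f3*f4/(D1*D2)) - a*b*f3'*f4'/(D1*D2) = a*b*G/(Q*D1)"
proof -
  have "K*(a*b*f3*f4/(D1*D2)) - a*b*f3'*f4'/(D1*D2) = (K*(a*b*f3*f4) - a*b*f3'*f4')/(D1*D2)" by (simp add: diff_divide_distrib)
  also have "\<dots> = a*b*(K*(f3*f4) - f3'*f4')/(D1*D2)" by (simp add: algebra_simps)
  also have "\<dots> = a*b*(D2*G/Q)/(D1*D2)" by (simp only: h)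
  also have "\<dots> = a*b*G/(Q*D1)" using D2 by (simp add: field_simps)
  finally show ?thesis .
qed

lemma lower_part_from_defect:
  fixes D1 :: complex
  assumes D1: "D1 \<noteq> 0" and h: "K*(g3*g4) - g3'*g4' = D1*G/Q"
  shows "K*(p*a*b*g3*g4/(D1*D2)) - p*a*b*g3'*g4'/(D1*D2) = p*a*b*G/(Q*D2)"
proof -
  have "K*(p*a*b*g3*g4/(D1*D2)) - p*a*b*g3'*g4'/(D1*D2) = (K*(p*a*b*g3*g4) - p*a*b*g3'*g4')/(D1*D2)" by (simp add: diff_divide_distrib)
  also have "\<dots> = p*a*b*(K*(g3*g4) - g3'*g4')/(D1*D2)" by (simp add: algebra_simps)
  also have "\<dots> = p*a*b*(D1*G/Q)/(D1*D2)" by (simp only: h)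
  also have "\<dots> = p*a*b*G/(Q*D2)" using D1 by (simp add: field_simps)
  finally show ?thesis .
qed

lemma diag_combine:
  fixes K :: complex
  assumes "K*uX - uY = PU" and "K*lX - lY = PL" and "K*\<alpha> + d - \<beta> = PU + PL"
  shows "K*(\<alpha> - uX - lX) + d = \<beta> - uY - lY"
  using assms by (simp add: algebra_simps)

lemma split_over_denominator:
  fixes D :: complex
  assumes "D \<noteq> 0" and "Q \<noteq> 0" and "m*D = (X + Y)/Q"
  shows "m = X/(Q*D) + Y/(Q*D)"
  using assms by (simp add: field_simps)

section \<open>The coefficients of A^c on the eigenbasis of A^b\<close>

lemma cE_sub: "0 \<le> M \<Longrightarrow> M < int n \<Longrightarrow> cE q n r0 Ba Ca Bb Cb Bc Cc (M+1) M = cL q n r0 Ba Ca Bb Cb Bc Cc (M+1)"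
  by (simp add: cE_def)

lemma cE_super: "0 \<le> M \<Longrightarrow> M < int n \<Longrightarrow> cE q n r0 Ba Ca Bb Cb Bc Cc M (M+1) = cU q n r0 Ba Ca Bb Cb Bc Cc (M+1)"
  by (simp add: cE_def)

lemma cE_sub': "0 < M \<Longrightarrow> M \<le> int n \<Longrightarrow> cE q n r0 Ba Ca Bb Cb Bc Cc M (M-1) = cL q n r0 Ba Ca Bb Cb Bc Cc M"
  by (simp add: cE_def)

lemma cE_super': "0 < M \<Longrightarrow> M \<le> int n \<Longrightarrow> cE q n r0 Ba Ca Bb Cb Bc Cc (M-1) M = cU q n r0 Ba Ca Bb Cb Bc Cc M"
  by (simp add: cE_def)

lemma cE_outside: "i \<notin> {0..int n} \<or> j \<notin> {0..int n} \<or> \<bar>i - j\<bar> > 1 \<Longrightarrow> cE q n r0 Ba Ca Bb Cb Bc Cc i j = 0"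
  by (auto simp: cE_def)

lemma cE_diag: "0 \<le> M \<Longrightarrow> M \<le> int n \<Longrightarrow> cE q n r0 Ba Ca Bb Cb Bc Cc M M =
    Bb + Cb - cE q n r0 Ba Ca Bb Cb Bc Cc M (M+1) - cE q n r0 Ba Ca Bb Cb Bc Cc M (M-1)"
  by (simp add: cE_def)

lemma coef_xy_diag:
  "0 \<le> M \<Longrightarrow> M \<le> int n \<Longrightarrow> coef_xy q n r0 bb cc x y z M M
    = bb x + cc x - coef_xy q n r0 bb cc x y z M (M+1) - coef_xy q n r0 bb cc x y z M (M-1)"
  unfolding coef_xy_def by (rule cE_diag)

lemma coef_yx_diag:
  "0 \<le> M \<Longrightarrow> M \<le> int n \<Longrightarrow> coef_yx q n r0 bb cc x y z M M
    = bb y + cc y - coef_yx q n r0 bb cc x y z M (M+1) - coef_yx q n r0 bb cc x y z M (M-1)"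
  unfolding coef_yx_def by (rule cE_diag)

text \<open>Of q not being a root of unity, the coefficient identities only use q^4 \<noteq> 1.\<close>

locale aw_parameters =
  fixes q r0 :: complex and bb cc :: "label \<Rightarrow> complex"
  assumes q_nz: "q \<noteq> 0" and q4_ne_1: "q^4 \<noteq> 1" and r0_nz: "r0 \<noteq> 0"
    and bb_nz: "bb x \<noteq> 0" and r0_rel: "r0 powi (-2) = bb x * cc x"
begin

lemma q2_minus_nz: "q^2 - inverse q^2 \<noteq> 0"
proof
  assume "q^2 - inverse q^2 = 0"
  then have "q^4 = 1" using q_nz by (simp add: field_simps power4_eq_xxxx power2_eq_square)
  then show False using q4_ne_1 by simp
qed

lemma q2_plus_nz: "q^2 + 1 \<noteq> 0"
proof
  assume "q^2 + 1 = 0"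
  then have "q^4 = (q^2)^2" "q^2 = -1" by (simp_all flip: power_mult add: eq_neg_iff_add_eq_0)
  then show False using q4_ne_1 by simp
qed

lemma q_minus_nz: "q - inverse q \<noteq> 0"
  using q2_minus_nz by (auto simp: power2_eq_square square_diff_square_factored)

lemma cc_eq: "cc x = inverse (r0^2 * bb x)"
  using r0_rel[of x] bb_nz[of x] r0_nz by (simp add: power_int_minus field_simps)

text \<open>Up to nonzero factors, the denominator and the numerator of g(k) are factors of
  A^(a,b)_{k,k+1} and of A^(a,b)_{k+1,k} respectively.\<close>

lemma gfun_denominator_nz:
  assumes "cU q n r0 (bb b) (cc b) (bb a) (cc a) (q powi (- 2 * int n) * cc c) (q powi (2 * int n) * bb c) (k+1) \<noteq> 0"
  shows "bb b * q powi (2*k) + r0 * q powi (-1) * cc a * bb c \<noteq> 0"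
proof -
  define x where "x = q powi (2*k)"
  define s where "s = q ^ n"
  have x0: "x \<noteq> 0" and s0: "s \<noteq> 0" using q_nz unfolding x_def s_def by auto
  note E = powi_in_x_s[OF q_nz x_def s_def]
  have fac: "cc b + bb a * (inverse (s^2) * cc c) * r0 * (x * s^2 * q) \<noteq> 0"
    using assms unfolding cU_def E by auto
  have "(cc b + bb a * (inverse (s^2) * cc c) * r0 * (x * s^2 * q)) * (r0^3 * bb b * cc a * bb c)
      = q * (bb b * x + r0 * inverse q * cc a * bb c)"
    using q_nz x0 s0 r0_nz bb_nz unfolding cc_eq by (simp add: field_simps power2_eq_square power3_eq_cube)
  moreover have "r0^3 * bb b * cc a * bb c \<noteq> 0" using r0_nz bb_nz cc_eq by simp
  ultimately show ?thesis using fac q_nz unfolding E x_def[symmetric] by auto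
qed

lemma gfun_numerator_nz:
  assumes "cL q n r0 (bb b) (cc b) (bb a) (cc a) (q powi (- 2 * int n) * cc c) (q powi (2 * int n) * bb c) (k+1) \<noteq> 0"
  shows "cc b * q powi (-2*k) + r0 * q * cc a * bb c \<noteq> 0"
proof -
  define x where "x = q powi (2*k)"
  define s where "s = q ^ n"
  have x0: "x \<noteq> 0" and s0: "s \<noteq> 0" using q_nz unfolding x_def s_def by auto
  note E = powi_in_x_s[OF q_nz x_def s_def]
  have fac: "bb a * (inverse (s^2) * cc c) * r0 * (s^2 / q) + bb b * x \<noteq> 0"
    using assms unfolding cL_def E by auto
  have "(bb a * (inverse (s^2) * cc c) * r0 * (s^2 / q) + bb b * x) * (r0^3 * cc a * bb c * q)
      = (cc b * inverse x + r0 * q * cc a * bb c) * (r0^2 * bb b * x)"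
    using q_nz x0 s0 r0_nz bb_nz unfolding cc_eq by (simp add: field_simps power2_eq_square power3_eq_cube)
  moreover have "r0^3 * cc a * bb c * q \<noteq> 0" using r0_nz bb_nz cc_eq q_nz by simp
  ultimately show ?thesis using fac x0 bb_nz r0_nz unfolding E by auto
qed

lemma subdiag_coef_identity:
  assumes M: "0 \<le> M" "M \<le> int n"
    and offdiag: "\<forall>N\<in>{0..int n}. \<forall>K\<in>{0..int n}. \<bar>N - K\<bar> = 1 \<longrightarrow> coef_xy q n r0 bb cc a b c N K \<noteq> 0"
  shows "r0 / (q^2 - inverse q^2) * (q * theta q bb cc b (M+1) - inverse q * theta q bb cc b M)
      * coef_xy q n r0 bb cc a b c (M+1) M
    = coef_yx q n r0 bb cc b c a (M+1) M * gfun q r0 bb cc a b c M"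
proof (cases "M = int n")
  case True
  then show ?thesis by (simp add: coef_xy_def coef_yx_def cE_def)
next
  case False
  then have Mn: "M < int n" using M by simp
  define x where "x = q powi (2*M)"
  define s where "s = q ^ n"
  have x0: "x \<noteq> 0" and s0: "s \<noteq> 0" using q_nz unfolding x_def s_def by auto
  note E = powi_in_x_s[OF q_nz x_def s_def]
  have "bb b * q powi (2*M) + r0 * q powi (-1) * cc a * bb c \<noteq> 0"
    using offdiag[rule_format, of M "M+1"] M Mn cE_super[OF M(1) Mn]
    by (intro gfun_denominator_nz) (simp add: coef_xy_def)
  then have gd: "bb b * x + r0 * inverse q * cc a * bb c \<noteq> 0"
    unfolding E x_def[symmetric] .
  show ?thesis
    unfolding coef_xy_def coef_yx_def cE_sub[OF M(1) Mn] theta_def gfun_def cL_def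
    apply (rule scaled_quotient_mult_eq)
    unfolding E x_def[symmetric]
    by (rule subdiag_factor_identity[OF q_nz q2_minus_nz x0 _ r0_nz bb_nz bb_nz bb_nz cc_eq cc_eq cc_eq gd])
      (use s0 in simp)
qed

lemma superdiag_coef_identity:
  assumes M: "0 \<le> M" "M \<le> int n"
    and offdiag: "\<forall>N\<in>{0..int n}. \<forall>K\<in>{0..int n}. \<bar>N - K\<bar> = 1 \<longrightarrow> coef_xy q n r0 bb cc a b c N K \<noteq> 0"
  shows "r0 / (q^2 - inverse q^2) * (q * theta q bb cc b (M-1) - inverse q * theta q bb cc b M)
      * coef_xy q n r0 bb cc a b c (M-1) M
    = coef_yx q n r0 bb cc b c a (M-1) M / gfun q r0 bb cc a b c (M-1)"
proof (cases "M = 0")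
  case True
  then show ?thesis by (simp add: coef_xy_def coef_yx_def cE_def)
next
  case False
  then have M0: "0 < M" using M by simp
  define x where "x = q powi (2*M)"
  define s where "s = q ^ n"
  have x0: "x \<noteq> 0" and s0: "s \<noteq> 0" using q_nz unfolding x_def s_def by auto
  note E = powi_in_x_s[OF q_nz x_def s_def]
  have "bb b * q powi (2*(M-1)) + r0 * q powi (-1) * cc a * bb c \<noteq> 0"
    using gfun_denominator_nz[of n b a c "M-1"] offdiag[rule_format, of "M-1" M] M M0 cE_super'[OF M0 M(2)]
    by (simp add: coef_xy_def)
  then have gd: "bb b * (x/q^2) + r0 * inverse q * cc a * bb c \<noteq> 0"
    unfolding E .
  have "cc b * q powi (-2*(M-1)) + r0 * q * cc a * bb c \<noteq> 0"
    using gfun_numerator_nz[of n b a c "M-1"] offdiag[rule_format, of M "M-1"] M M0 cE_sub'[OF M0 M(2)]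
    by (simp add: coef_xy_def)
  then have gn: "cc b * (q^2/x) + r0 * q * cc a * bb c \<noteq> 0"
    unfolding E .
  show ?thesis
    unfolding coef_xy_def coef_yx_def cE_super'[OF M0 M(2)] theta_def gfun_def cU_def
    apply (rule scaled_quotient_div_eq)
    unfolding E x_def[symmetric]
    by (rule superdiag_factor_identity[OF q_nz q2_minus_nz x0 s0 r0_nz bb_nz bb_nz bb_nz cc_eq cc_eq cc_eq gn gd])
qed

lemma upper_diag_part:
  assumes M: "0 \<le> M" "M \<le> int n"
    and offdiag: "\<forall>N\<in>{0..int n}. \<forall>K\<in>{0..int n}. \<bar>N - K\<bar> = 1 \<longrightarrow> coef_xy q n r0 bb cc a b c N K \<noteq> 0"
  defines "x \<equiv> q powi (2*M)" and "s \<equiv> q ^ n"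
  shows "r0 / (q^2 - inverse q^2) * (q * theta q bb cc b M - inverse q * theta q bb cc b M)
      * coef_xy q n r0 bb cc a b c M (M+1) - coef_yx q n r0 bb cc b c a M (M+1)
    = (1 - x/s^2) * (cc b - bb b * x)
      * (- 1/(r0^2*bb c) + q/(x*r0^3*bb b*bb a) - q*x * s^2*r0*bb b*bb a + q^2 * s^2*bb c)
      / ((q^2+1) * (cc b - bb b * x^2))"
proof (cases "M = int n")
  case True
  have "x = s^2"
    unfolding x_def s_def True by (metis mult.commute of_nat_mult of_nat_numeral power_int_of_nat power_mult)
  with True show ?thesis using q_nz by (simp add: coef_xy_def coef_yx_def cE_outside s_def)
next
  case False
  then have Mn: "M < int n" using M by simp
  have x0: "x \<noteq> 0" and s0: "s \<noteq> 0" using q_nz unfolding x_def s_def by auto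
  note E = powi_in_x_s[OF q_nz x_def[THEN meta_eq_to_obj_eq] s_def[THEN meta_eq_to_obj_eq]]
  have "cU q n r0 (bb b) (cc b) (bb a) (cc a) (q powi (- 2 * int n) * cc c) (q powi (2 * int n) * bb c) (M+1) \<noteq> 0"
    using offdiag[rule_format, of M "M+1"] M Mn cE_super[OF M(1) Mn] by (simp add: coef_xy_def)
  then have D: "cc b - bb b * (x^2 * q^2) \<noteq> 0"
    unfolding cU_def E x_def[symmetric] by auto
  show ?thesis
    unfolding coef_xy_def coef_yx_def cE_super[OF M(1) Mn] theta_def cU_def E x_def[symmetric]
    by (rule upper_part_from_defect[OF D upper_defect_identity[OF q_nz q2_plus_nz q_minus_nz x0 s0 r0_nz
          bb_nz bb_nz bb_nz cc_eq cc_eq cc_eq]])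
qed

lemma lower_diag_part:
  assumes M: "0 \<le> M" "M \<le> int n"
    and offdiag: "\<forall>N\<in>{0..int n}. \<forall>K\<in>{0..int n}. \<bar>N - K\<bar> = 1 \<longrightarrow> coef_xy q n r0 bb cc a b c N K \<noteq> 0"
  defines "x \<equiv> q powi (2*M)" and "s \<equiv> q ^ n"
  shows "r0 / (q^2 - inverse q^2) * (q * theta q bb cc b M - inverse q * theta q bb cc b M)
      * coef_xy q n r0 bb cc a b c M (M-1) - coef_yx q n r0 bb cc b c a M (M-1)
    = q^2/s^2 * (1 - x) * (cc b - bb b * (x * s^2))
      * (1/(q^2*r0^2*bb c) + s^2*bb a/(q*x*r0*bb b) - x*bb b/(q*r0*bb a) - s^2*bb c)
      / ((q^2+1) * (cc b - bb b * x^2))"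
proof (cases "M = 0")
  case True
  then show ?thesis by (simp add: coef_xy_def coef_yx_def cE_outside x_def)
next
  case False
  then have M0: "0 < M" using M by simp
  have x0: "x \<noteq> 0" and s0: "s \<noteq> 0" using q_nz unfolding x_def s_def by auto
  note E = powi_in_x_s[OF q_nz x_def[THEN meta_eq_to_obj_eq] s_def[THEN meta_eq_to_obj_eq]]
  have "cL q n r0 (bb b) (cc b) (bb a) (cc a) (q powi (- 2 * int n) * cc c) (q powi (2 * int n) * bb c) M \<noteq> 0"
    using offdiag[rule_format, of M "M-1"] M M0 cE_sub'[OF M0 M(2)] by (simp add: coef_xy_def)
  then have D: "cc b - bb b * (x^2/q^2) \<noteq> 0"
    unfolding cL_def E x_def[symmetric] by auto
  show ?thesis
    unfolding coef_xy_def coef_yx_def cE_sub'[OF M0 M(2)] theta_def cL_def E x_def[symmetric]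
    by (rule lower_part_from_defect[OF D lower_defect_identity[OF q_nz q2_plus_nz q_minus_nz x0 s0 r0_nz
          bb_nz bb_nz bb_nz cc_eq cc_eq cc_eq]])
qed

lemma diag_constant_part:
  fixes M :: int and n :: nat
  defines "x \<equiv> q powi (2*M)" and "s \<equiv> q ^ n"
  assumes D: "cc b - bb b * x^2 \<noteq> 0"
  shows "r0 / (q^2 - inverse q^2) * (q * theta q bb cc b M - inverse q * theta q bb cc b M) * (bb a + cc a)
      + r0 * omega q n r0 bb cc a b c / ((q - inverse q) * (q^2 - inverse q^2)) - (bb c + cc c)
    = (1 - x/s^2) * (cc b - bb b * x)
      * (- 1/(r0^2*bb c) + q/(x*r0^3*bb b*bb a) - q*x * s^2*r0*bb b*bb a + q^2 * s^2*bb c)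
      / ((q^2+1) * (cc b - bb b * x^2))
    + q^2/s^2 * (1 - x) * (cc b - bb b * (x * s^2))
      * (1/(q^2*r0^2*bb c) + s^2*bb a/(q*x*r0*bb b) - x*bb b/(q*r0*bb a) - s^2*bb c)
      / ((q^2+1) * (cc b - bb b * x^2))"
proof -
  have x0: "x \<noteq> 0" and s0: "s \<noteq> 0" using q_nz unfolding x_def s_def by auto
  note E = powi_in_x_s[OF q_nz x_def[THEN meta_eq_to_obj_eq] s_def[THEN meta_eq_to_obj_eq]]
  show ?thesis
    unfolding theta_def omega_def thetaS_def E x_def[symmetric]
    by (rule split_over_denominator[OF D q2_plus_nz diag_constant_identity[OF q_nz q2_plus_nz q_minus_nz
          x0 s0 r0_nz bb_nz bb_nz bb_nz cc_eq cc_eq cc_eq]])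
qed

lemma diag_coef_identity:
  assumes M: "0 \<le> M" "M \<le> int n"
    and offdiag: "\<forall>N\<in>{0..int n}. \<forall>K\<in>{0..int n}. \<bar>N - K\<bar> = 1 \<longrightarrow> coef_xy q n r0 bb cc a b c N K \<noteq> 0"
  shows "r0 / (q^2 - inverse q^2) * (q * theta q bb cc b M - inverse q * theta q bb cc b M)
      * coef_xy q n r0 bb cc a b c M M
      + r0 * omega q n r0 bb cc a b c / ((q - inverse q) * (q^2 - inverse q^2))
    = coef_yx q n r0 bb cc b c a M M"
proof (cases "n = 0")
  case True
  then have M0: "M = 0" using M by simp
  define x where "x = q powi (2*M)"
  define s where "s = q ^ n"
  have x1: "x = 1" and s1: "s = 1" unfolding x_def s_def M0 True by simp_all
  note E = powi_in_x_s[OF q_nz x_def s_def]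
  show ?thesis
    unfolding coef_xy_diag[OF M] coef_yx_diag[OF M] theta_def omega_def thetaS_def E x_def[symmetric] x1 s1
    using M0 True diag_constant_identity_dim0[OF q_nz q2_plus_nz q_minus_nz r0_nz bb_nz bb_nz bb_nz cc_eq cc_eq cc_eq]
    by (simp add: coef_xy_def coef_yx_def cE_outside)
next
  case False
  have D: "cc b - bb b * (q powi (2*M))^2 \<noteq> 0"
  proof (cases "M < int n")
    case True
    then have "cU q n r0 (bb b) (cc b) (bb a) (cc a) (q powi (- 2 * int n) * cc c) (q powi (2 * int n) * bb c) (M+1) \<noteq> 0"
      using offdiag[rule_format, of M "M+1"] M cE_super[OF M(1)] by (simp add: coef_xy_def)
    then show ?thesis unfolding cU_def by (auto simp: powi_in_x_s[OF q_nz refl refl])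
  next
    case False
    then have "0 < M" using M \<open>n \<noteq> 0\<close> by simp
    then have "cL q n r0 (bb b) (cc b) (bb a) (cc a) (q powi (- 2 * int n) * cc c) (q powi (2 * int n) * bb c) M \<noteq> 0"
      using offdiag[rule_format, of M "M-1"] M cE_sub'[OF _ M(2)] by (simp add: coef_xy_def)
    then show ?thesis unfolding cL_def by (auto simp: powi_in_x_s[OF q_nz refl refl])
  qed
  show ?thesis
    unfolding coef_xy_diag[OF M] coef_yx_diag[OF M]
    by (rule diag_combine[OF upper_diag_part[OF M offdiag] lower_diag_part[OF M offdiag] diag_constant_part[OF D]])
qed

end

theorem lemma3p4:
  fixes q r0 :: complex and n :: nat
    and bb cc :: "label \<Rightarrow> complex"
    and A :: "label \<Rightarrow> complex^'n^'n"
    and a b c :: label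
    and va vb :: "int \<Rightarrow> complex^'n"
  assumes dim: "CARD('n) = n + 1"
    and q_nz: "q \<noteq> 0" and q_nonroot: "\<forall>k::nat. k > 0 \<longrightarrow> q ^ k \<noteq> 1"
    and r0_nz: "r0 \<noteq> 0" and bb_nz: "\<forall>x. bb x \<noteq> 0"
    and cc_nz: "\<forall>x. cc x \<noteq> 0"
    and r0_rel: "\<forall>x. r0 powi (-2) = bb x * cc x"
    and A_dia: "A Dia = smat (r0 / (q^2 - inverse q^2)) (qbr q (A Star) (A Dot))
        + smat (r0 * omega q n r0 bb cc Dot Star Dia / ((q - inverse q) * (q^2 - inverse q^2))) (mat 1)"
    and AW: "\<forall>x y z. distinct [x, y, z] \<longrightarrow>
        qbr (inverse q) (A x) (qbr q (A x) (A y))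
          = smat (- ((q^2 - inverse q^2)^2 / r0^2)) (A y)
            + smat (omega q n r0 bb cc x y z) (A x)
            + smat ((q + inverse q) / r0 * omega q n r0 bb cc x z y) (mat 1)"
    and cyc: "cyclic a b c"
    and LP_ab: "leonard_pair_ord n (A a) (A b) (theta q bb cc a) (theta q bb cc b)"
    and LP_bc: "leonard_pair_ord n (A b) (A c) (theta q bb cc b) (theta q bb cc c)"
    and att: "attached_bases q n r0 bb cc A a b c va vb"
  shows "\<forall>M\<in>{0..int n}.
     A c *v vb M =
        (coef_yx q n r0 bb cc b c a (M+1) M * gfun q r0 bb cc a b c M) *s vb (M+1)
      + coef_yx q n r0 bb cc b c a M M *s vb M
      + (coef_yx q n r0 bb cc b c a (M-1) M / gfun q r0 bb cc a b c (M-1)) *s vb (M-1)"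
proof
  fix M assume M: "M \<in> {0..int n}"
  interpret aw_parameters q r0 bb cc
    using q_nz q_nonroot[rule_format, of 4] r0_nz bb_nz r0_rel by unfold_locales auto
  let ?X = "coef_xy q n r0 bb cc a b c" and ?\<theta> = "theta q bb cc b"
    and ?k = "r0 / (q^2 - inverse q^2)"
    and ?d = "r0 * omega q n r0 bb cc a b c / ((q - inverse q) * (q^2 - inverse q^2))"
  have vb: "is_basis n vb" and eig: "\<forall>K\<in>{0..int n}. A b *v vb K = ?\<theta> K *s vb K"
    and tri: "\<forall>K\<in>{0..int n}. A a *v vb K = ?X (K+1) K *s vb (K+1) + ?X K K *s vb K + ?X (K-1) K *s vb (K-1)"
    using att unfolding attached_bases_def by auto
  have out: "\<forall>N K. N \<notin> {0..int n} \<longrightarrow> ?X N K = 0"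
    by (simp add: coef_xy_def cE_outside)
  \<comment> \<open>The pair (A^a, A^b) alone gives this.\<close>
  have Xnz: "\<forall>N\<in>{0..int n}. \<forall>K\<in>{0..int n}. \<bar>N - K\<bar> = 1 \<longrightarrow> ?X N K \<noteq> 0"
    by (rule leonard_pair_offdiag_nonzero[OF LP_ab vb eig tri out])
  have "A c *v vb M = (?k * (q * ?\<theta> (M+1) - inverse q * ?\<theta> M) * ?X (M+1) M) *s vb (M+1)
      + (?k * (q * ?\<theta> M - inverse q * ?\<theta> M) * ?X M M + ?d) *s vb M
      + (?k * (q * ?\<theta> (M-1) - inverse q * ?\<theta> M) * ?X (M-1) M) *s vb (M-1)"
    using qcommutator_tridiagonal_action[OF eig M] tri M out
      cyclic_qcommutator_formula[OF q_nz q2_minus_nz r0_nz A_dia AW cyc]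
    by blast
  also have "\<dots> = (coef_yx q n r0 bb cc b c a (M+1) M * gfun q r0 bb cc a b c M) *s vb (M+1)
      + coef_yx q n r0 bb cc b c a M M *s vb M
      + (coef_yx q n r0 bb cc b c a (M-1) M / gfun q r0 bb cc a b c (M-1)) *s vb (M-1)"
    using M unfolding atLeastAtMost_iff
    by (simp only: subdiag_coef_identity[OF _ _ Xnz] diag_coef_identity[OF _ _ Xnz]
        superdiag_coef_identity[OF _ _ Xnz])
  finally show "A c *v vb M = \<dots>" .
qed

end
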